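(* Let $p,q\in\mathbb{K}[z]$ with $q\neq 0$ and $p/q$ a rational invariant. Then $p(Z)\,q(z)-q(Z)\,p(z)\in O$.
   Context: Let $\mathbb{K}$ be an algebraically closed field; $\lambda=(\lambda_1,\dots,\lambda_l)$, $z=(z_1,\dots,z_n)$, $Z=(Z_1,\dots,Z_n)$ indeterminates. An algebraic group $\mathcal{G}\subset\mathbb{K}^l$ is the variety of a radical unmixed-dimensional ideal $G\subset\mathbb{K}[\lambda]$ with polynomial group operations and neutral element $e$. A rational action is $g=(g_1,\dots,g_n)$, $g_i\in h^{-1}\mathbb{K}[\lambda,z]$, with $g(e,\bar z)=\bar z$ and $g(\bar\mu,g(\bar\lambda,\bar z))=g(\bar\mu\cdot\bar\lambda,\bar z)$ whenever both sides are defined; assume (i) for every $\bar z$, $h(\lambda,\bar z)$ is not a zero divisor modulo $G$, (ii) for every $\bar\lambda\in\mathcal{G}$ some $(\bar\lambda,\bar z)$ lies in the domain of $g$. $O=\big(G+(Z-g(\lambda,z))\big)\cap\mathbb{K}[z,Z]$, the sum being an ideal of $h^{-1}\mathbb{K}[\lambda,z,Z]$. A rational invariant is $r\in\mathbb{K}(z)$ with $r(g(\lambda,z))=r(z)$ modulo $G$. *)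

theory Defs
  imports "HOL-Library.Poly_Mapping" "HOL-Computational_Algebra.Polynomial"
begin

text \<open>Variables: Lam i = lambda_i (group parameters), Mu i = mu_i (second copy of the
group parameters, used to write the group multiplication), Zl i = z_i, ZU i = Z_i,
and an auxiliary variable T used to present the localisation h^{-1}R as R[T]/(hT-1).\<close>

datatype var = Lam nat | Mu nat | Zl nat | ZU nat | T

type_synonym 'k mpoly = "(var \<Rightarrow>\<^sub>0 nat) \<Rightarrow>\<^sub>0 'k"

definition Const :: "'k::comm_ring_1 \<Rightarrow> 'k mpoly" where
  "Const c = Poly_Mapping.single 0 c"

definition Var :: "var \<Rightarrow> 'k::comm_ring_1 mpoly" where
  "Var v = Poly_Mapping.single (Poly_Mapping.single v 1) 1"

definition vars :: "'k::comm_ring_1 mpoly \<Rightarrow> var set" where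
  "vars p = (\<Union>m\<in>Poly_Mapping.keys p. Poly_Mapping.keys (m::var \<Rightarrow>\<^sub>0 nat))"

definition polys :: "var set \<Rightarrow> 'k::comm_ring_1 mpoly set" where
  "polys V = {p. vars p \<subseteq> V}"

definition eval :: "(var \<Rightarrow> 'k::comm_ring_1) \<Rightarrow> 'k mpoly \<Rightarrow> 'k" where
  "eval \<rho> p = (\<Sum>m\<in>Poly_Mapping.keys p.
      Poly_Mapping.lookup p m * (\<Prod>v\<in>Poly_Mapping.keys m. \<rho> v ^ Poly_Mapping.lookup (m::var \<Rightarrow>\<^sub>0 nat) v))"

definition subst :: "(var \<Rightarrow> 'k::comm_ring_1 mpoly) \<Rightarrow> 'k mpoly \<Rightarrow> 'k mpoly" where
  "subst \<sigma> p = (\<Sum>m\<in>Poly_Mapping.keys p.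
      Const (Poly_Mapping.lookup p m) * (\<Prod>v\<in>Poly_Mapping.keys m. \<sigma> v ^ Poly_Mapping.lookup (m::var \<Rightarrow>\<^sub>0 nat) v))"

definition ideal_gen :: "'k::comm_ring_1 mpoly set \<Rightarrow> 'k mpoly set \<Rightarrow> 'k mpoly set" where
  "ideal_gen R S = {f. \<exists>(m::nat) c s. f = (\<Sum>i<m. c i * s i) \<and> (\<forall>i<m. c i \<in> R \<and> s i \<in> S)}"

definition is_ideal :: "'k::comm_ring_1 mpoly set \<Rightarrow> 'k mpoly set \<Rightarrow> bool" where
  "is_ideal R I \<longleftrightarrow> I \<subseteq> R \<and> 0 \<in> I \<and> (\<forall>f\<in>I. \<forall>g\<in>I. f + g \<in> I)
      \<and> (\<forall>r\<in>R. \<forall>f\<in>I. r * f \<in> I)"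

definition is_prime_ideal :: "'k::comm_ring_1 mpoly set \<Rightarrow> 'k mpoly set \<Rightarrow> bool" where
  "is_prime_ideal R P \<longleftrightarrow> is_ideal R P \<and> 1 \<notin> P
      \<and> (\<forall>f\<in>R. \<forall>g\<in>R. f * g \<in> P \<longrightarrow> f \<in> P \<or> g \<in> P)"

definition is_radical_ideal :: "'k::comm_ring_1 mpoly set \<Rightarrow> 'k mpoly set \<Rightarrow> bool" where
  "is_radical_ideal R I \<longleftrightarrow> is_ideal R I \<and> (\<forall>f\<in>R. \<forall>k::nat. k > 0 \<longrightarrow> f ^ k \<in> I \<longrightarrow> f \<in> I)"

definition minimal_prime_over :: "'k::comm_ring_1 mpoly set \<Rightarrow> 'k mpoly set \<Rightarrow> 'k mpoly set \<Rightarrow> bool" where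
  "minimal_prime_over R I P \<longleftrightarrow> is_prime_ideal R P \<and> I \<subseteq> P
      \<and> (\<forall>P'. is_prime_ideal R P' \<and> I \<subseteq> P' \<and> P' \<subseteq> P \<longrightarrow> P' = P)"

text \<open>Krull dimension of K[V]/P for a prime P of K[V] (V finite): the maximal number of
variables of V that are algebraically independent modulo P.\<close>
definition prime_dim :: "var set \<Rightarrow> 'k::comm_ring_1 mpoly set \<Rightarrow> nat" where
  "prime_dim V P = Max {card S | S. S \<subseteq> V \<and> P \<inter> polys S = {0}}"

text \<open>Unmixed dimensional: all associated primes have the same dimension (for a radical
ideal the associated primes are exactly the minimal primes).\<close>
definition unmixed_dim :: "var set \<Rightarrow> 'k::comm_ring_1 mpoly set \<Rightarrow> bool" where
  "unmixed_dim V I \<longleftrightarrow> (\<exists>d. \<forall>P. minimal_prime_over (polys V) I P \<longrightarrow> prime_dim V P = d)"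

definition Lvars :: "nat \<Rightarrow> var set" where "Lvars l = Lam ` {..<l}"
definition Mvars :: "nat \<Rightarrow> var set" where "Mvars l = Mu ` {..<l}"
definition zvars :: "nat \<Rightarrow> var set" where "zvars n = Zl ` {..<n}"
definition Zvars :: "nat \<Rightarrow> var set" where "Zvars n = ZU ` {..<n}"

text \<open>Points of K^k, represented as functions vanishing from index k on.\<close>
definition pts :: "nat \<Rightarrow> (nat \<Rightarrow> 'k::zero) set" where
  "pts k = {x. \<forall>i\<ge>k. x i = 0}"

definition envL :: "(nat \<Rightarrow> 'k::zero) \<Rightarrow> var \<Rightarrow> 'k" where
  "envL x v = (case v of Lam i \<Rightarrow> x i | _ \<Rightarrow> 0)"

definition envLM :: "(nat \<Rightarrow> 'k::zero) \<Rightarrow> (nat \<Rightarrow> 'k) \<Rightarrow> var \<Rightarrow> 'k" where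
  "envLM x y v = (case v of Lam i \<Rightarrow> x i | Mu i \<Rightarrow> y i | _ \<Rightarrow> 0)"

definition envLz :: "(nat \<Rightarrow> 'k::zero) \<Rightarrow> (nat \<Rightarrow> 'k) \<Rightarrow> var \<Rightarrow> 'k" where
  "envLz x y v = (case v of Lam i \<Rightarrow> x i | Zl i \<Rightarrow> y i | _ \<Rightarrow> 0)"

definition variety :: "nat \<Rightarrow> 'k::comm_ring_1 mpoly set \<Rightarrow> (nat \<Rightarrow> 'k) set" where
  "variety l G = {x \<in> pts l. \<forall>f\<in>G. eval (envL x) f = 0}"

text \<open>Group multiplication x . y given by polynomials M i in K[lambda,mu]
(lambda := x the first factor, mu := y the second factor), inversion by polynomials Inv i in K[lambda].\<close>
definition gmul :: "nat \<Rightarrow> (nat \<Rightarrow> 'k::comm_ring_1 mpoly) \<Rightarrow> (nat \<Rightarrow> 'k) \<Rightarrow> (nat \<Rightarrow> 'k) \<Rightarrow> nat \<Rightarrow> 'k" where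
  "gmul l M x y = (\<lambda>i. if i < l then eval (envLM x y) (M i) else 0)"

definition ginv :: "nat \<Rightarrow> (nat \<Rightarrow> 'k::comm_ring_1 mpoly) \<Rightarrow> (nat \<Rightarrow> 'k) \<Rightarrow> nat \<Rightarrow> 'k" where
  "ginv l Inv x = (\<lambda>i. if i < l then eval (envL x) (Inv i) else 0)"

definition alg_group ::
  "nat \<Rightarrow> 'k::comm_ring_1 mpoly set \<Rightarrow> (nat \<Rightarrow> 'k mpoly) \<Rightarrow> (nat \<Rightarrow> 'k mpoly) \<Rightarrow> (nat \<Rightarrow> 'k) \<Rightarrow> bool" where
  "alg_group l G M Inv e \<longleftrightarrow>
     is_radical_ideal (polys (Lvars l)) G \<and> unmixed_dim (Lvars l) G
   \<and> (\<forall>i<l. M i \<in> polys (Lvars l \<union> Mvars l)) \<and> (\<forall>i<l. Inv i \<in> polys (Lvars l))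
   \<and> e \<in> variety l G
   \<and> (\<forall>x\<in>variety l G. \<forall>y\<in>variety l G. gmul l M x y \<in> variety l G)
   \<and> (\<forall>x\<in>variety l G. ginv l Inv x \<in> variety l G)
   \<and> (\<forall>x\<in>variety l G. \<forall>y\<in>variety l G. \<forall>z\<in>variety l G.
        gmul l M (gmul l M x y) z = gmul l M x (gmul l M y z))
   \<and> (\<forall>x\<in>variety l G. gmul l M e x = x \<and> gmul l M x e = x)
   \<and> (\<forall>x\<in>variety l G. gmul l M (ginv l Inv x) x = e \<and> gmul l M x (ginv l Inv x) = e)"

definition gdef :: "'k::field mpoly \<Rightarrow> (nat \<Rightarrow> 'k) \<Rightarrow> (nat \<Rightarrow> 'k) \<Rightarrow> bool" where
  "gdef h x y \<longleftrightarrow> eval (envLz x y) h \<noteq> 0"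

definition gact :: "nat \<Rightarrow> (nat \<Rightarrow> 'k::field mpoly) \<Rightarrow> 'k mpoly \<Rightarrow> (nat \<Rightarrow> 'k) \<Rightarrow> (nat \<Rightarrow> 'k) \<Rightarrow> nat \<Rightarrow> 'k" where
  "gact n a h x y = (\<lambda>i. if i < n then eval (envLz x y) (a i) / eval (envLz x y) h else 0)"

definition spec_z :: "(nat \<Rightarrow> 'k::comm_ring_1) \<Rightarrow> var \<Rightarrow> 'k mpoly" where
  "spec_z y v = (case v of Zl i \<Rightarrow> Const (y i) | _ \<Rightarrow> Var v)"

definition rational_action ::
  "nat \<Rightarrow> nat \<Rightarrow> 'k::field mpoly set \<Rightarrow> (nat \<Rightarrow> 'k mpoly) \<Rightarrow> (nat \<Rightarrow> 'k) \<Rightarrow>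
   (nat \<Rightarrow> 'k mpoly) \<Rightarrow> 'k mpoly \<Rightarrow> bool" where
  "rational_action l n G M e a h \<longleftrightarrow>
     (\<forall>i<n. a i \<in> polys (Lvars l \<union> zvars n)) \<and> h \<in> polys (Lvars l \<union> zvars n)
   \<and> (\<forall>y\<in>pts n. gdef h e y \<longrightarrow> gact n a h e y = y)
   \<and> (\<forall>x\<in>variety l G. \<forall>x'\<in>variety l G. \<forall>y\<in>pts n.
        gdef h x y \<and> gdef h x' (gact n a h x y) \<and> gdef h (gmul l M x' x) y
        \<longrightarrow> gact n a h x' (gact n a h x y) = gact n a h (gmul l M x' x) y)
   \<and> (\<forall>y\<in>pts n. \<forall>f\<in>polys (Lvars l). subst (spec_z y) h * f \<in> G \<longrightarrow> f \<in> G)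
   \<and> (\<forall>x\<in>variety l G. \<exists>y\<in>pts n. gdef h x y)"

text \<open>Substitutions z \<mapsto> g(lambda,z) = a(lambda,z) T (with T = 1/h) and z \<mapsto> Z.\<close>
definition sub_g :: "(nat \<Rightarrow> 'k::comm_ring_1 mpoly) \<Rightarrow> var \<Rightarrow> 'k mpoly" where
  "sub_g a v = (case v of Zl i \<Rightarrow> a i * Var T | _ \<Rightarrow> Var v)"

definition sub_Z :: "var \<Rightarrow> 'k::comm_ring_1 mpoly" where
  "sub_Z v = (case v of Zl i \<Rightarrow> Var (ZU i) | _ \<Rightarrow> Var v)"

text \<open>O = (G + (Z - g(lambda,z))) \<inter> K[z,Z], the sum taken in h^{-1}K[lambda,z,Z],
presented as K[lambda,z,Z,T]/(hT - 1).\<close>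
definition orbit_ideal ::
  "nat \<Rightarrow> nat \<Rightarrow> 'k::field mpoly set \<Rightarrow> (nat \<Rightarrow> 'k mpoly) \<Rightarrow> 'k mpoly \<Rightarrow> 'k mpoly set" where
  "orbit_ideal l n G a h =
     polys (zvars n \<union> Zvars n) \<inter>
     ideal_gen (polys (Lvars l \<union> zvars n \<union> Zvars n \<union> {T}))
       (G \<union> {Var (ZU i) - a i * Var T | i. i < n} \<union> {h * Var T - 1})"

text \<open>p/q is a rational invariant: r(g(lambda,z)) = r(z) modulo G (in h^{-1}K[lambda,z]),
i.e. p(g(lambda,z)) q(z) - q(g(lambda,z)) p(z) \<in> G h^{-1}K[lambda,z].\<close>
definition rational_invariant ::
  "nat \<Rightarrow> nat \<Rightarrow> 'k::field mpoly set \<Rightarrow> (nat \<Rightarrow> 'k mpoly) \<Rightarrow> 'k mpoly \<Rightarrow> 'k mpoly \<Rightarrow> 'k mpoly \<Rightarrow> bool" where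
  "rational_invariant l n G a h p q \<longleftrightarrow>
     p \<in> polys (zvars n) \<and> q \<in> polys (zvars n) \<and> q \<noteq> 0 \<and>
     subst (sub_g a) p * q - subst (sub_g a) q * p
       \<in> ideal_gen (polys (Lvars l \<union> zvars n \<union> {T})) (G \<union> {h * Var T - 1})"

definition alg_closed_field :: "'k::field itself \<Rightarrow> bool" where
  "alg_closed_field _ \<longleftrightarrow> (\<forall>f::'k poly. degree f > 0 \<longrightarrow> (\<exists>x. poly f x = 0))"

end

theory Submission
  imports Defs
begin

text \<open>Modulo G + (Z - a T) + (h T - 1) we have Z_i \<equiv> a_i T = g_i, and substitution respects
  congruences, so p(Z) \<equiv> p(g) and q(Z) \<equiv> q(g). Hence p(Z) q(z) - q(Z) p(z) is congruent to
  p(g) q(z) - q(g) p(z), which lies in the ideal by invariance of p/q; being a polynomial in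
  z and Z only, it lies in O.\<close>

lemma vars_add: "vars (p + q) \<subseteq> vars p \<union> vars q"
  using keys_add[of p q] by (auto simp: vars_def)

lemma vars_diff: "vars (p - q) \<subseteq> vars p \<union> vars q"
  using keys_diff[of p q] by (auto simp: vars_def)

lemma vars_uminus: "vars (- p) = vars p"
  by (simp add: vars_def)

lemma vars_mult: "vars (p * q) \<subseteq> vars p \<union> vars q"
proof
  fix v assume "v \<in> vars (p * q)"
  then obtain m where m: "m \<in> Poly_Mapping.keys (p * q)" "v \<in> Poly_Mapping.keys m"
    by (auto simp: vars_def)
  then obtain x y where "m = x + y" "x \<in> Poly_Mapping.keys p" "y \<in> Poly_Mapping.keys q"
    using keys_mult[of p q] by auto
  with m(2) show "v \<in> vars p \<union> vars q"
    by (auto simp: vars_def in_keys_iff lookup_add)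
qed

lemma vars_Var: "vars (Var v :: 'k::comm_ring_1 mpoly) \<subseteq> {v}"
  by (simp add: vars_def Var_def)

lemma polys_mono: "V \<subseteq> W \<Longrightarrow> p \<in> polys V \<Longrightarrow> p \<in> polys W"
  unfolding polys_def by blast

lemma polys_Const [simp]: "Const c \<in> polys V"
  by (simp add: polys_def vars_def Const_def)

lemma polys_Var: "v \<in> V \<Longrightarrow> Var v \<in> polys V"
  unfolding polys_def using vars_Var by blast

lemma polys_add: "p \<in> polys V \<Longrightarrow> q \<in> polys V \<Longrightarrow> p + q \<in> polys V"
  unfolding polys_def using vars_add by blast

lemma polys_diff: "p \<in> polys V \<Longrightarrow> q \<in> polys V \<Longrightarrow> p - q \<in> polys V"
  unfolding polys_def using vars_diff by blast

lemma polys_uminus: "p \<in> polys V \<Longrightarrow> - p \<in> polys V"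
  by (simp add: polys_def vars_uminus)

lemma polys_mult: "p \<in> polys V \<Longrightarrow> q \<in> polys V \<Longrightarrow> p * q \<in> polys V"
  unfolding polys_def using vars_mult by blast

lemma polys_zero [simp]: "0 \<in> polys V"
  by (simp add: polys_def vars_def)

lemma polys_one [simp]: "1 \<in> polys V"
  by (simp add: polys_def vars_def)

lemma polys_power: "p \<in> polys V \<Longrightarrow> p ^ k \<in> polys V"
  by (induction k) (auto intro: polys_mult)

lemma polys_sum: "(\<And>i. i \<in> A \<Longrightarrow> f i \<in> polys V) \<Longrightarrow> sum f A \<in> polys V"
  by (induction A rule: infinite_finite_induct) (auto intro: polys_add)

lemma polys_prod: "(\<And>i. i \<in> A \<Longrightarrow> f i \<in> polys V) \<Longrightarrow> prod f A \<in> polys V"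
  by (induction A rule: infinite_finite_induct) (auto intro: polys_mult)

lemma polys_subst:
  assumes "\<And>v. v \<in> vars p \<Longrightarrow> \<sigma> v \<in> polys V"
  shows "subst \<sigma> p \<in> polys V"
  unfolding subst_def
  by (intro polys_sum polys_mult polys_Const polys_prod polys_power assms) (auto simp: vars_def)

lemma ideal_gen_mono: "R \<subseteq> R' \<Longrightarrow> S \<subseteq> S' \<Longrightarrow> ideal_gen R S \<subseteq> ideal_gen R' S'"
  unfolding ideal_gen_def by blast

lemma ideal_gen_generator: "s \<in> S \<Longrightarrow> s \<in> ideal_gen (polys V) S"
  unfolding ideal_gen_def
  by (intro CollectI exI[of _ 1] exI[of _ "\<lambda>_. 1"] exI[of _ "\<lambda>_. s"]) auto

lemma ideal_gen_zero: "0 \<in> ideal_gen R S"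
  unfolding ideal_gen_def by (intro CollectI exI[of _ 0]) auto

lemma ideal_gen_add:
  assumes "f \<in> ideal_gen R S" "g \<in> ideal_gen R S"
  shows "f + g \<in> ideal_gen R S"
proof -
  obtain m :: nat and c s where f: "f = (\<Sum>i<m. c i * s i)" "\<forall>i<m. c i \<in> R \<and> s i \<in> S"
    using assms(1) unfolding ideal_gen_def by blast
  obtain m' :: nat and c' s' where g: "g = (\<Sum>i<m'. c' i * s' i)" "\<forall>i<m'. c' i \<in> R \<and> s' i \<in> S"
    using assms(2) unfolding ideal_gen_def by blast
  define C where "C i = (if i < m then c i else c' (i - m))" for i
  define D where "D i = (if i < m then s i else s' (i - m))" for i
  have "(\<Sum>i<m + m'. C i * D i) = (\<Sum>i<m. C i * D i) + (\<Sum>i<m'. C (m + i) * D (m + i))"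
    by (induction m') (auto simp: algebra_simps)
  also have "\<dots> = f + g"
    unfolding f g C_def D_def by simp
  finally have "f + g = (\<Sum>i<m + m'. C i * D i)" ..
  moreover have "\<forall>i<m + m'. C i \<in> R \<and> D i \<in> S"
    using f g unfolding C_def D_def by auto
  ultimately show ?thesis
    unfolding ideal_gen_def by blast
qed

lemma ideal_gen_mult:
  assumes "r \<in> polys V" "f \<in> ideal_gen (polys V) S"
  shows "r * f \<in> ideal_gen (polys V) S"
proof -
  obtain m :: nat and c s where f: "f = (\<Sum>i<m. c i * s i)" "\<forall>i<m. c i \<in> polys V \<and> s i \<in> S"
    using assms(2) unfolding ideal_gen_def by blast
  have "r * f = (\<Sum>i<m. (r * c i) * s i)"
    unfolding f by (simp add: sum_distrib_left mult.assoc)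
  moreover have "\<forall>i<m. r * c i \<in> polys V \<and> s i \<in> S"
    using f assms(1) polys_mult by blast
  ultimately show ?thesis
    unfolding ideal_gen_def by (intro CollectI exI[of _ m] exI[of _ "\<lambda>i. r * c i"] exI[of _ s]) simp
qed

lemma ideal_gen_diff:
  assumes "f \<in> ideal_gen (polys V) S" "g \<in> ideal_gen (polys V) S"
  shows "f - g \<in> ideal_gen (polys V) S"
proof -
  have "(- 1) * g \<in> ideal_gen (polys V) S"
    using assms(2) by (intro ideal_gen_mult polys_uminus polys_one)
  then show ?thesis
    using ideal_gen_add[OF assms(1)] by (metis diff_conv_add_uminus mult_minus1)
qed

lemma ideal_gen_cong_mult:
  assumes "a \<in> polys V" "d \<in> polys V"
    and "a - b \<in> ideal_gen (polys V) S" "c - d \<in> ideal_gen (polys V) S"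
  shows "a * c - b * d \<in> ideal_gen (polys V) S"
proof -
  have "a * c - b * d = a * (c - d) + d * (a - b)"
    by (simp add: algebra_simps)
  then show ?thesis
    using assms by (simp add: ideal_gen_add ideal_gen_mult)
qed

lemma ideal_gen_cong_power:
  assumes "x \<in> polys V" "y \<in> polys V" "x - y \<in> ideal_gen (polys V) S"
  shows "x ^ k - y ^ k \<in> ideal_gen (polys V) S"
proof (induction k)
  case 0
  show ?case by (simp add: ideal_gen_zero)
next
  case (Suc k)
  then show ?case
    using assms by (simp add: ideal_gen_cong_mult polys_power)
qed

lemma ideal_gen_cong_prod:
  assumes "\<And>v. v \<in> A \<Longrightarrow> f v \<in> polys V \<and> g v \<in> polys V \<and> f v - g v \<in> ideal_gen (polys V) S"
  shows "prod f A - prod g A \<in> ideal_gen (polys V) S"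
  using assms
proof (induction A rule: infinite_finite_induct)
  case (insert v A)
  then show ?case
    by (simp add: ideal_gen_cong_mult polys_prod)
qed (simp_all add: ideal_gen_zero)

lemma ideal_gen_cong_sum:
  assumes "\<And>v. v \<in> A \<Longrightarrow> f v - g v \<in> ideal_gen R S"
  shows "sum f A - sum g A \<in> ideal_gen R S"
  using assms
proof (induction A rule: infinite_finite_induct)
  case (insert v A)
  have "(f v - g v) + (sum f A - sum g A) \<in> ideal_gen R S"
    using insert by (intro ideal_gen_add) auto
  then show ?case
    using insert by (simp add: algebra_simps)
qed (simp_all add: ideal_gen_zero)

lemma ideal_gen_cong_subst:
  assumes "\<And>v. v \<in> vars p \<Longrightarrow>
    \<sigma> v \<in> polys V \<and> \<tau> v \<in> polys V \<and> \<sigma> v - \<tau> v \<in> ideal_gen (polys V) S"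
  shows "subst \<sigma> p - subst \<tau> p \<in> ideal_gen (polys V) S"
  unfolding subst_def
proof (rule ideal_gen_cong_sum)
  fix m assume m: "m \<in> Poly_Mapping.keys p"
  let ?c = "Const (Poly_Mapping.lookup p m)"
  let ?A = "\<Prod>v\<in>Poly_Mapping.keys m. \<sigma> v ^ Poly_Mapping.lookup m v"
  let ?B = "\<Prod>v\<in>Poly_Mapping.keys m. \<tau> v ^ Poly_Mapping.lookup m v"
  have "v \<in> vars p" if "v \<in> Poly_Mapping.keys m" for v
    using m that by (auto simp: vars_def)
  then have "?A - ?B \<in> ideal_gen (polys V) S"
    using assms by (intro ideal_gen_cong_prod) (simp add: polys_power ideal_gen_cong_power)
  then have "?c * (?A - ?B) \<in> ideal_gen (polys V) S"
    by (intro ideal_gen_mult polys_Const)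
  then show "?c * ?A - ?c * ?B \<in> ideal_gen (polys V) S"
    by (simp add: algebra_simps)
qed

lemma ideal_gen_cross_cong:
  assumes "p \<in> polys V" "q \<in> polys V"
    and "P - p' \<in> ideal_gen (polys V) S" "Q - q' \<in> ideal_gen (polys V) S"
    and "p' * q - q' * p \<in> ideal_gen (polys V) S"
  shows "P * q - Q * p \<in> ideal_gen (polys V) S"
proof -
  have "P * q - Q * p = (q * (P - p') - p * (Q - q')) + (p' * q - q' * p)"
    by (simp add: algebra_simps)
  then show ?thesis
    using assms by (simp add: ideal_gen_add ideal_gen_diff ideal_gen_mult)
qed

definition orbit_vars :: "nat \<Rightarrow> nat \<Rightarrow> var set" where
  "orbit_vars l n = Lvars l \<union> zvars n \<union> Zvars n \<union> {T}"

definition orbit_gens ::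
  "nat \<Rightarrow> 'k::comm_ring_1 mpoly set \<Rightarrow> (nat \<Rightarrow> 'k mpoly) \<Rightarrow> 'k mpoly \<Rightarrow> 'k mpoly set" where
  "orbit_gens n G a h = G \<union> {Var (ZU i) - a i * Var T | i. i < n} \<union> {h * Var T - 1}"

lemma orbit_ideal_eq:
  "orbit_ideal l n G a h =
     polys (zvars n \<union> Zvars n) \<inter> ideal_gen (polys (orbit_vars l n)) (orbit_gens n G a h)"
  by (simp add: orbit_ideal_def orbit_vars_def orbit_gens_def)

lemma polys_zvars_orbit_vars: "f \<in> polys (zvars n) \<Longrightarrow> f \<in> polys (orbit_vars l n)"
  by (rule polys_mono) (auto simp: orbit_vars_def)

lemma subst_sub_Z_cong_sub_g:
  fixes a :: "nat \<Rightarrow> 'k::comm_ring_1 mpoly"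
  assumes "\<And>i. i < n \<Longrightarrow> a i \<in> polys (Lvars l \<union> zvars n)" and "f \<in> polys (zvars n)"
  shows "subst sub_Z f - subst (sub_g a) f \<in> ideal_gen (polys (orbit_vars l n)) (orbit_gens n G a h)"
proof (rule ideal_gen_cong_subst)
  fix v assume "v \<in> vars f"
  then obtain i where i: "v = Zl i" "i < n"
    using assms(2) by (auto simp: polys_def zvars_def)
  have Z: "Var (ZU i) \<in> polys (orbit_vars l n)" and T: "Var T \<in> polys (orbit_vars l n)"
    using i by (auto simp: orbit_vars_def Zvars_def intro: polys_Var)
  have "a i \<in> polys (orbit_vars l n)"
    using assms(1)[OF i(2)] by (rule polys_mono[rotated]) (auto simp: orbit_vars_def)
  with T have aT: "a i * Var T \<in> polys (orbit_vars l n)"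
    by (rule polys_mult[rotated])
  have "Var (ZU i) - a i * Var T \<in> orbit_gens n G a h"
    using i by (auto simp: orbit_gens_def)
  moreover have "sub_Z v = (Var (ZU i) :: 'k mpoly)" "sub_g a v = a i * Var T"
    using i by (simp_all add: sub_Z_def sub_g_def)
  ultimately show "(sub_Z v :: 'k mpoly) \<in> polys (orbit_vars l n) \<and> sub_g a v \<in> polys (orbit_vars l n) \<and>
      sub_Z v - sub_g a v \<in> ideal_gen (polys (orbit_vars l n)) (orbit_gens n G a h)"
    using Z aT by (simp add: ideal_gen_generator)
qed

lemma invariance_ideal_subset_orbit_ideal:
  "ideal_gen (polys (Lvars l \<union> zvars n \<union> {T})) (G \<union> {h * Var T - 1})
     \<subseteq> ideal_gen (polys (orbit_vars l n)) (orbit_gens n G a h)"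
  unfolding orbit_vars_def orbit_gens_def
  by (rule ideal_gen_mono) (auto intro: polys_mono[rotated])

lemma polys_subst_sub_Z:
  assumes "f \<in> polys (zvars n)"
  shows "subst sub_Z f \<in> polys (Zvars n)"
proof (rule polys_subst)
  fix v assume "v \<in> vars f"
  then obtain i where "v = Zl i" "i < n"
    using assms by (auto simp: polys_def zvars_def)
  then show "sub_Z v \<in> polys (Zvars n)"
    by (auto simp: sub_Z_def Zvars_def intro: polys_Var)
qed

theorem mainTheorem3:
  fixes l n :: nat
    and G :: "'k::field mpoly set"
    and M Inv :: "nat \<Rightarrow> 'k mpoly"
    and e :: "nat \<Rightarrow> 'k"
    and a :: "nat \<Rightarrow> 'k mpoly"
    and h p q :: "'k mpoly"
  assumes "alg_closed_field TYPE('k)"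
    and "alg_group l G M Inv e"
    and "rational_action l n G M e a h"
    and "p \<in> polys (zvars n)" and "q \<in> polys (zvars n)" and "q \<noteq> 0"
    and "rational_invariant l n G a h p q"
  shows "subst sub_Z p * q - subst sub_Z q * p \<in> orbit_ideal l n G a h"
proof -
  let ?J = "ideal_gen (polys (orbit_vars l n)) (orbit_gens n G a h)"
  have a: "\<And>i. i < n \<Longrightarrow> a i \<in> polys (Lvars l \<union> zvars n)"
    using assms(3) by (simp add: rational_action_def)
  have invariance: "subst (sub_g a) p * q - subst (sub_g a) q * p \<in> ?J"
    using assms(7) invariance_ideal_subset_orbit_ideal[of l n G h a]
    unfolding rational_invariant_def by blast
  have "subst sub_Z p - subst (sub_g a) p \<in> ?J" "subst sub_Z q - subst (sub_g a) q \<in> ?J"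
    using assms(4,5) by (simp_all add: subst_sub_Z_cong_sub_g a)
  with invariance have "subst sub_Z p * q - subst sub_Z q * p \<in> ?J"
    using assms(4,5) by (simp add: ideal_gen_cross_cong polys_zvars_orbit_vars)
  moreover have "subst sub_Z p * q - subst sub_Z q * p \<in> polys (zvars n \<union> Zvars n)"
    using assms(4,5) polys_subst_sub_Z
    by (intro polys_diff polys_mult) (auto intro: polys_mono[rotated])
  ultimately show ?thesis
    by (simp add: orbit_ideal_eq)
qed

end
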